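(* Let $X=\{a_1,\dots,a_n\}$ be a finite topological space with furtherness matrix $\Psi(X)$. Then $X$ is $T_0$ if and only if all rows of $\Psi(X)$ are pairwise distinct, and $X$ is $T_0$ if and only if all columns of $\Psi(X)$ are pairwise distinct.
   Context: For a finite topological space $X$ and $x\in X$, $U_x$ denotes the minimal open set containing $x$. A nested sequence of open sets around $x$ is a finite sequence $U_0\subsetneq U_1\subsetneq\cdots\subsetneq U_m=X$ of open sets with $U_0=U_x$ such that for each $j$ there is no open set $V$ with $U_j\subsetneq V\subsetneq U_{j+1}$. The furtherness function $\Psi:X\times X\to\{0,1,\dots,|X|-1\}$ is defined by: $\Psi(x,y)$ is the smallest integer $k\ge 0$ such that there exists a nested sequence $(U_j)_{j\ge0}$ of open sets around $x$ with $y\in U_k$. The furtherness matrix $\Psi(X)$ is the $n\times n$ matrix with $(i,j)$ entry $\Psi(a_i,a_j)$. *)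

theory Defs
  imports "HOL-Analysis.Analysis"
begin

definition minimal_open :: "'a topology \<Rightarrow> 'a \<Rightarrow> 'a set" where
  "minimal_open T x = \<Inter>{U. openin T U \<and> x \<in> U}"

definition nested_seq :: "'a topology \<Rightarrow> 'a \<Rightarrow> (nat \<Rightarrow> 'a set) \<Rightarrow> nat \<Rightarrow> bool" where
  "nested_seq T x U m \<longleftrightarrow>
     U 0 = minimal_open T x \<and> U m = topspace T \<and>
     (\<forall>j\<le>m. openin T (U j)) \<and>
     (\<forall>j<m. U j \<subset> U (Suc j) \<and> \<not> (\<exists>V. openin T V \<and> U j \<subset> V \<and> V \<subset> U (Suc j)))"

definition furtherness :: "'a topology \<Rightarrow> 'a \<Rightarrow> 'a \<Rightarrow> nat" where
  "furtherness T x y = (LEAST k. \<exists>U m. nested_seq T x U m \<and> k \<le> m \<and> y \<in> U k)"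

definition psi_row :: "'a topology \<Rightarrow> (nat \<Rightarrow> 'a) \<Rightarrow> nat \<Rightarrow> nat \<Rightarrow> nat list" where
  "psi_row T a n i = map (\<lambda>j. furtherness T (a i) (a j)) [0..<n]"

definition psi_col :: "'a topology \<Rightarrow> (nat \<Rightarrow> 'a) \<Rightarrow> nat \<Rightarrow> nat \<Rightarrow> nat list" where
  "psi_col T a n j = map (\<lambda>i. furtherness T (a i) (a j)) [0..<n]"

end

theory Submission
  imports Defs
begin

text \<open>In a finite space every point has a smallest open neighbourhood U x, and any open set
extends to a maximal chain of open sets ending in the whole space, so nested sequences
exist and furtherness T x y = 0 holds exactly when y lies in U x. A separating open set
containing x but not y therefore gives furtherness T x y > 0 = furtherness T y y and
furtherness T x x = 0 < furtherness T x y, distinguishing both the rows and the columns of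
x and y. Conversely, topologically indistinguishable points have the same minimal open set
and lie in the same members of every nested sequence, so their rows and columns coincide.\<close>

lemma
  assumes "finite (topspace T)" and "x \<in> topspace T"
  shows openin_minimal_open: "openin T (minimal_open T x)"
    and in_minimal_open: "x \<in> minimal_open T x"
proof -
  have "{U. openin T U \<and> x \<in> U} \<subseteq> Pow (topspace T)"
    using openin_subset by blast
  then have "finite {U. openin T U \<and> x \<in> U}"
    using assms(1) finite_subset by blast
  then show "openin T (minimal_open T x)"
    unfolding minimal_open_def using assms(2) by (intro openin_Inter) auto
  show "x \<in> minimal_open T x"
    unfolding minimal_open_def by auto
qed

lemma minimal_open_subset: "openin T U \<Longrightarrow> x \<in> U \<Longrightarrow> minimal_open T x \<subseteq> U"
  unfolding minimal_open_def by auto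

definition open_chain_to_topspace :: "'a topology \<Rightarrow> 'a set \<Rightarrow> (nat \<Rightarrow> 'a set) \<Rightarrow> nat \<Rightarrow> bool" where
  "open_chain_to_topspace T V U m \<longleftrightarrow>
     U 0 = V \<and> U m = topspace T \<and>
     (\<forall>j\<le>m. openin T (U j)) \<and>
     (\<forall>j<m. U j \<subset> U (Suc j) \<and> \<not> (\<exists>W. openin T W \<and> U j \<subset> W \<and> W \<subset> U (Suc j)))"

lemma nested_seq_iff_open_chain_to_topspace:
  "nested_seq T x U m \<longleftrightarrow> open_chain_to_topspace T (minimal_open T x) U m"
  unfolding nested_seq_def open_chain_to_topspace_def ..

lemma open_cover_exists:
  assumes "finite (topspace T)" and "openin T V" and "V \<subset> topspace T"
  obtains W where "openin T W" "V \<subset> W" "\<not> (\<exists>W'. openin T W' \<and> V \<subset> W' \<and> W' \<subset> W)"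
proof -
  let ?S = "{W. openin T W \<and> V \<subset> W}"
  have "?S \<subseteq> Pow (topspace T)"
    using openin_subset by blast
  then have "finite ?S"
    using assms(1) finite_subset by blast
  moreover have "topspace T \<in> ?S"
    using assms(3) by auto
  ultimately obtain W where "W \<in> ?S" and "\<forall>W'\<in>?S. W' \<le> W \<longrightarrow> W = W'"
    using finite_has_minimal[of ?S] by blast
  then show thesis
    by (intro that) auto
qed

lemma open_chain_to_topspace_exists:
  assumes "finite (topspace T)" and "openin T V"
  shows "\<exists>U m. open_chain_to_topspace T V U m"
  using assms(2)
proof (induction "card (topspace T - V)" arbitrary: V rule: less_induct)
  case less
  show ?case
  proof (cases "V = topspace T")
    case True
    then show ?thesis
      by (intro exI[of _ "\<lambda>_. V"] exI[of _ 0]) (auto simp: open_chain_to_topspace_def)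
  next
    case False
    then have "V \<subset> topspace T"
      using openin_subset[OF less.prems] by blast
    with assms(1) less.prems obtain W where W: "openin T W" "V \<subset> W"
      and cover: "\<not> (\<exists>W'. openin T W' \<and> V \<subset> W' \<and> W' \<subset> W)"
      by (rule open_cover_exists)
    have "card (topspace T - W) < card (topspace T - V)"
      using W openin_subset[OF W(1)] assms(1) by (intro psubset_card_mono) auto
    with less.hyps W(1) obtain U m where U: "open_chain_to_topspace T W U m"
      by blast
    have "open_chain_to_topspace T V (case_nat V U) (Suc m)"
      using U W cover less.prems
      unfolding open_chain_to_topspace_def by (simp add: All_less_Suc2 flip: less_Suc_eq_le)
    then show ?thesis
      by blast
  qed
qed

lemma nested_seq_exists:
  assumes "finite (topspace T)" and "x \<in> topspace T"
  obtains U m where "nested_seq T x U m"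
  using open_chain_to_topspace_exists[OF assms(1) openin_minimal_open[OF assms]]
  by (auto simp: nested_seq_iff_open_chain_to_topspace)

lemma furtherness_eq_0_iff:
  assumes "finite (topspace T)" and "x \<in> topspace T" and "y \<in> topspace T"
  shows "furtherness T x y = 0 \<longleftrightarrow> y \<in> minimal_open T x"
proof -
  let ?P = "\<lambda>k. \<exists>U m. nested_seq T x U m \<and> k \<le> m \<and> y \<in> U k"
  obtain U m where U: "nested_seq T x U m"
    using assms(1,2) by (rule nested_seq_exists)
  then have "?P m"
    using assms(3) by (auto simp: nested_seq_def)
  then have "?P (furtherness T x y)"
    unfolding furtherness_def by (rule LeastI)
  moreover have "?P 0" if "y \<in> minimal_open T x"
    using U that by (auto simp: nested_seq_def)
  ultimately show ?thesis
    unfolding furtherness_def by (auto simp: nested_seq_def)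
qed

lemma furtherness_refl:
  assumes "finite (topspace T)" and "x \<in> topspace T"
  shows "furtherness T x x = 0"
  using furtherness_eq_0_iff[OF assms assms(2)] in_minimal_open[OF assms] by simp

lemma furtherness_neq_0_if_separated:
  assumes "finite (topspace T)" and "openin T U" and "x \<in> U" and "y \<in> topspace T - U"
  shows "furtherness T x y \<noteq> 0"
proof -
  have "x \<in> topspace T"
    using assms(2,3) openin_subset by blast
  moreover have "y \<notin> minimal_open T x"
    using minimal_open_subset[OF assms(2,3)] assms(4) by blast
  ultimately show ?thesis
    using furtherness_eq_0_iff[OF assms(1)] assms(4) by simp
qed

lemma
  assumes "\<And>U. openin T U \<Longrightarrow> x \<in> U \<longleftrightarrow> y \<in> U"
  shows furtherness_indistinguishable_left: "furtherness T x = furtherness T y"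
    and furtherness_indistinguishable_right: "furtherness T z x = furtherness T z y"
proof -
  have "minimal_open T x = minimal_open T y"
    unfolding minimal_open_def using assms by metis
  then show "furtherness T x = furtherness T y"
    unfolding furtherness_def nested_seq_def by simp
  have "nested_seq T z U m \<Longrightarrow> k \<le> m \<Longrightarrow> x \<in> U k \<longleftrightarrow> y \<in> U k" for U m k
    using assms unfolding nested_seq_def by blast
  then show "furtherness T z x = furtherness T z y"
    unfolding furtherness_def by metis
qed

lemma furtherness_distinguishes_if_t0_space:
  assumes "finite (topspace T)" and "t0_space T"
    and "x \<in> topspace T" and "y \<in> topspace T" and "x \<noteq> y"
  shows "\<exists>z\<in>topspace T. furtherness T x z \<noteq> furtherness T y z"
    and "\<exists>z\<in>topspace T. furtherness T z x \<noteq> furtherness T z y"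
proof -
  obtain U where U: "openin T U" "x \<notin> U \<longleftrightarrow> y \<in> U"
    using assms(2-5) unfolding t0_space_def by blast
  have "(furtherness T x y \<noteq> furtherness T y y \<and> furtherness T x x \<noteq> furtherness T x y) \<or>
      (furtherness T x x \<noteq> furtherness T y x \<and> furtherness T y x \<noteq> furtherness T y y)"
    using U assms(3,4) furtherness_neq_0_if_separated[OF assms(1) U(1)] furtherness_refl[OF assms(1)]
    by (cases "x \<in> U") auto
  with assms(3,4) show "\<exists>z\<in>topspace T. furtherness T x z \<noteq> furtherness T y z"
    and "\<exists>z\<in>topspace T. furtherness T z x \<noteq> furtherness T z y"
    by blast+
qed

lemma t0_space_iff_furtherness_rows_distinct:
  assumes "finite (topspace T)"
  shows "t0_space T \<longleftrightarrow> (\<forall>x\<in>topspace T. \<forall>y\<in>topspace T. x \<noteq> y \<longrightarrow>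
           (\<exists>z\<in>topspace T. furtherness T x z \<noteq> furtherness T y z))"
proof
  assume "t0_space T"
  then show "\<forall>x\<in>topspace T. \<forall>y\<in>topspace T. x \<noteq> y \<longrightarrow>
      (\<exists>z\<in>topspace T. furtherness T x z \<noteq> furtherness T y z)"
    using furtherness_distinguishes_if_t0_space(1)[OF assms] by blast
next
  assume distinct: "\<forall>x\<in>topspace T. \<forall>y\<in>topspace T. x \<noteq> y \<longrightarrow>
      (\<exists>z\<in>topspace T. furtherness T x z \<noteq> furtherness T y z)"
  show "t0_space T"
    unfolding t0_space_def
  proof (intro ballI impI)
    fix x y assume "x \<in> topspace T" "y \<in> topspace T" "x \<noteq> y"
    with distinct obtain z where "furtherness T x z \<noteq> furtherness T y z"
      by blast
    then show "\<exists>U. openin T U \<and> (x \<notin> U \<longleftrightarrow> y \<in> U)"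
      by (metis furtherness_indistinguishable_left)
  qed
qed

lemma t0_space_iff_furtherness_columns_distinct:
  assumes "finite (topspace T)"
  shows "t0_space T \<longleftrightarrow> (\<forall>x\<in>topspace T. \<forall>y\<in>topspace T. x \<noteq> y \<longrightarrow>
           (\<exists>z\<in>topspace T. furtherness T z x \<noteq> furtherness T z y))"
proof
  assume "t0_space T"
  then show "\<forall>x\<in>topspace T. \<forall>y\<in>topspace T. x \<noteq> y \<longrightarrow>
      (\<exists>z\<in>topspace T. furtherness T z x \<noteq> furtherness T z y)"
    using furtherness_distinguishes_if_t0_space(2)[OF assms] by blast
next
  assume distinct: "\<forall>x\<in>topspace T. \<forall>y\<in>topspace T. x \<noteq> y \<longrightarrow>
      (\<exists>z\<in>topspace T. furtherness T z x \<noteq> furtherness T z y)"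
  show "t0_space T"
    unfolding t0_space_def
  proof (intro ballI impI)
    fix x y assume "x \<in> topspace T" "y \<in> topspace T" "x \<noteq> y"
    with distinct obtain z where "furtherness T z x \<noteq> furtherness T z y"
      by blast
    then show "\<exists>U. openin T U \<and> (x \<notin> U \<longleftrightarrow> y \<in> U)"
      by (metis furtherness_indistinguishable_right)
  qed
qed

lemma psi_row_eq_iff:
  "psi_row T a n i = psi_row T a n j \<longleftrightarrow>
     (\<forall>k<n. furtherness T (a i) (a k) = furtherness T (a j) (a k))"
  unfolding psi_row_def by (auto simp: map_eq_conv)

lemma psi_col_eq_iff:
  "psi_col T a n i = psi_col T a n j \<longleftrightarrow>
     (\<forall>k<n. furtherness T (a k) (a i) = furtherness T (a k) (a j))"
  unfolding psi_col_def by (auto simp: map_eq_conv)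

lemma bij_betw_distinct_pairs_iff:
  assumes "bij_betw a {..<n} S"
  shows "(\<forall>i<n. \<forall>j<n. i \<noteq> j \<longrightarrow> P (a i) (a j)) \<longleftrightarrow> (\<forall>x\<in>S. \<forall>y\<in>S. x \<noteq> y \<longrightarrow> P x y)"
  using assms unfolding bij_betw_def inj_on_def by fastforce

theorem mainTheorem14:
  fixes T :: "'a topology" and a :: "nat \<Rightarrow> 'a" and n :: nat
  assumes "finite (topspace T)"
    and "bij_betw a {..<n} (topspace T)"
  shows "(t0_space T \<longleftrightarrow> (\<forall>i<n. \<forall>j<n. i \<noteq> j \<longrightarrow> psi_row T a n i \<noteq> psi_row T a n j))
       \<and> (t0_space T \<longleftrightarrow> (\<forall>i<n. \<forall>j<n. i \<noteq> j \<longrightarrow> psi_col T a n i \<noteq> psi_col T a n j))"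
proof -
  have image: "a ` {..<n} = topspace T"
    using assms(2) by (simp add: bij_betw_def)
  have rows: "psi_row T a n i \<noteq> psi_row T a n j \<longleftrightarrow>
      (\<exists>z\<in>topspace T. furtherness T (a i) z \<noteq> furtherness T (a j) z)" for i j
    unfolding psi_row_eq_iff image[symmetric] by blast
  have cols: "psi_col T a n i \<noteq> psi_col T a n j \<longleftrightarrow>
      (\<exists>z\<in>topspace T. furtherness T z (a i) \<noteq> furtherness T z (a j))" for i j
    unfolding psi_col_eq_iff image[symmetric] by blast
  show ?thesis
    unfolding rows cols
      bij_betw_distinct_pairs_iff[OF assms(2),
        where P = "\<lambda>x y. \<exists>z\<in>topspace T. furtherness T x z \<noteq> furtherness T y z"]
      bij_betw_distinct_pairs_iff[OF assms(2),
        where P = "\<lambda>x y. \<exists>z\<in>topspace T. furtherness T z x \<noteq> furtherness T z y"]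
    using t0_space_iff_furtherness_rows_distinct[OF assms(1)]
      t0_space_iff_furtherness_columns_distinct[OF assms(1)]
    by blast
qed

end
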